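(* Let $X$ be an $\operatorname{Irr}$-continuous $T_0$ space, $(x_i)_{i\in I}$ a net in $X$ and $y\in X$. Then $(x_i)_{i\in I}$ $\operatorname{Irr}$-converges to $y$ if and only if for each $x\in\twoheaddownarrow_{\operatorname{Irr}} y$ there is $k(x)\in I$ such that $x_i\ge x$ for all $i\ge k(x)$.
   Context: For a topological space $X$, a nonempty subset $E$ is irreducible if whenever $E\subseteq A_1\cup A_2$ with $A_1,A_2$ closed, $E\subseteq A_1$ or $E\subseteq A_2$. The specialisation order is $x\le y$ iff $x\in\operatorname{cl}(\{y\})$; $\uparrow x=\{z:z\ge x\}$; $\bigvee$ denotes supremum in this order. $\operatorname{Irr}^+(X)$ is the set of irreducible subsets whose supremum exists. $x\ll_{\operatorname{Irr}} y$ iff for every $E\in\operatorname{Irr}^+(X)$ with $\bigvee E\ge y$, $E\cap\uparrow x\ne\emptyset$; $\twoheaddownarrow_{\operatorname{Irr}} x=\{y:y\ll_{\operatorname{Irr}} x\}$. $X$ is $\operatorname{Irr}$-continuous if for every $x$, $\twoheaddownarrow_{\operatorname{Irr}} x$ is irreducible and $x=\bigvee\twoheaddownarrow_{\operatorname{Irr}} x$. A net $(x_i)_{i\in I}$ is a map from a preorder $(I,\le)$ to $X$. It $\operatorname{Irr}$-converges to $y$ if there is $E\in\operatorname{Irr}^+(X)$ with $\bigvee E\ge y$ such that for each $e\in E$ there is $k(e)\in I$ with $x_i\ge e$ for all $i\ge k(e)$. *)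

theory Defs
  imports "HOL-Analysis.Analysis"
begin

definition spec_le :: "'a topology \<Rightarrow> 'a \<Rightarrow> 'a \<Rightarrow> bool" where
  "spec_le X x y \<longleftrightarrow> x \<in> topspace X \<and> y \<in> topspace X \<and> x \<in> X closure_of {y}"

definition upset :: "'a topology \<Rightarrow> 'a \<Rightarrow> 'a set" where
  "upset X x = {z \<in> topspace X. spec_le X x z}"

definition irreducible_in :: "'a topology \<Rightarrow> 'a set \<Rightarrow> bool" where
  "irreducible_in X E \<longleftrightarrow> E \<subseteq> topspace X \<and> E \<noteq> {} \<and>
     (\<forall>A1 A2. closedin X A1 \<and> closedin X A2 \<and> E \<subseteq> A1 \<union> A2 \<longrightarrow> E \<subseteq> A1 \<or> E \<subseteq> A2)"

definition is_spec_sup :: "'a topology \<Rightarrow> 'a set \<Rightarrow> 'a \<Rightarrow> bool" where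
  "is_spec_sup X E s \<longleftrightarrow> s \<in> topspace X \<and> (\<forall>e\<in>E. spec_le X e s) \<and>
     (\<forall>u\<in>topspace X. (\<forall>e\<in>E. spec_le X e u) \<longrightarrow> spec_le X s u)"

definition Irr_plus :: "'a topology \<Rightarrow> 'a set set" where
  "Irr_plus X = {E. irreducible_in X E \<and> (\<exists>s. is_spec_sup X E s)}"

definition sup_ge :: "'a topology \<Rightarrow> 'a set \<Rightarrow> 'a \<Rightarrow> bool" where
  "sup_ge X E y \<longleftrightarrow> (\<exists>s. is_spec_sup X E s \<and> spec_le X y s)"

definition way_below_Irr :: "'a topology \<Rightarrow> 'a \<Rightarrow> 'a \<Rightarrow> bool" where
  "way_below_Irr X x y \<longleftrightarrow> x \<in> topspace X \<and> y \<in> topspace X \<and>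
     (\<forall>E\<in>Irr_plus X. sup_ge X E y \<longrightarrow> E \<inter> upset X x \<noteq> {})"

definition ddown_Irr :: "'a topology \<Rightarrow> 'a \<Rightarrow> 'a set" where
  "ddown_Irr X x = {y \<in> topspace X. way_below_Irr X y x}"

definition Irr_continuous :: "'a topology \<Rightarrow> bool" where
  "Irr_continuous X \<longleftrightarrow> (\<forall>x\<in>topspace X.
     irreducible_in X (ddown_Irr X x) \<and> is_spec_sup X (ddown_Irr X x) x)"

definition is_preorder_on :: "'i set \<Rightarrow> ('i \<Rightarrow> 'i \<Rightarrow> bool) \<Rightarrow> bool" where
  "is_preorder_on I le \<longleftrightarrow> (\<forall>i\<in>I. le i i) \<and>
     (\<forall>i\<in>I. \<forall>j\<in>I. \<forall>k\<in>I. le i j \<and> le j k \<longrightarrow> le i k)"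

definition Irr_converges :: "'a topology \<Rightarrow> 'i set \<Rightarrow> ('i \<Rightarrow> 'i \<Rightarrow> bool) \<Rightarrow> ('i \<Rightarrow> 'a) \<Rightarrow> 'a \<Rightarrow> bool" where
  "Irr_converges X I le net y \<longleftrightarrow> (\<exists>E\<in>Irr_plus X. sup_ge X E y \<and>
     (\<forall>e\<in>E. \<exists>k\<in>I. \<forall>i\<in>I. le k i \<longrightarrow> spec_le X e (net i)))"

end

theory Submission
  imports Defs
begin

text \<open>Forwards, every element way below y lies below some element of the witnessing
  irreducible set E, since the supremum of E dominates y. Backwards, Irr-continuity makes
  the set of elements way below y itself such a witness.\<close>

lemma spec_le_refl: "y \<in> topspace X \<Longrightarrow> spec_le X y y"
  using closure_of_subset[of "{y}" X] unfolding spec_le_def by auto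

lemma spec_le_trans:
  assumes "spec_le X x e" and "spec_le X e z"
  shows "spec_le X x z"
proof -
  have "{e} \<subseteq> X closure_of {z}"
    using assms(2) unfolding spec_le_def by auto
  then have "X closure_of {e} \<subseteq> X closure_of {z}"
    by (metis closure_of_closure_of closure_of_mono)
  then show ?thesis
    using assms unfolding spec_le_def by auto
qed

lemma eventually_spec_ge_mono:
  assumes "spec_le X x e" and "\<exists>k\<in>I. \<forall>i\<in>I. le k i \<longrightarrow> spec_le X e (net i)"
  shows "\<exists>k\<in>I. \<forall>i\<in>I. le k i \<longrightarrow> spec_le X x (net i)"
proof -
  obtain k where "k \<in> I" and "\<forall>i\<in>I. le k i \<longrightarrow> spec_le X e (net i)"
    using assms(2) by blast
  then show ?thesis
    using spec_le_trans[OF assms(1)] by blast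
qed

lemma way_below_Irr_meets_upset:
  assumes "way_below_Irr X x y" and "E \<in> Irr_plus X" and "sup_ge X E y"
  obtains e where "e \<in> E" and "spec_le X x e"
proof -
  have "E \<inter> upset X x \<noteq> {}"
    using assms unfolding way_below_Irr_def by auto
  then show thesis
    using that unfolding upset_def by auto
qed

lemma Irr_converges_imp_eventually_above_ddown:
  assumes "Irr_converges X I le net y" and "x \<in> ddown_Irr X y"
  shows "\<exists>k\<in>I. \<forall>i\<in>I. le k i \<longrightarrow> spec_le X x (net i)"
proof -
  obtain E where E: "E \<in> Irr_plus X" "sup_ge X E y"
    and eventually_above: "\<forall>e\<in>E. \<exists>k\<in>I. \<forall>i\<in>I. le k i \<longrightarrow> spec_le X e (net i)"
    using assms(1) unfolding Irr_converges_def by (elim bexE conjE) auto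
  have "way_below_Irr X x y"
    using assms(2) unfolding ddown_Irr_def by auto
  then obtain e where "e \<in> E" and "spec_le X x e"
    using E by (rule way_below_Irr_meets_upset)
  then show ?thesis
    using eventually_above by (blast intro: eventually_spec_ge_mono)
qed

lemma Irr_continuous_ddown_Irr_in_Irr_plus:
  assumes "Irr_continuous X" and "y \<in> topspace X"
  shows "ddown_Irr X y \<in> Irr_plus X" and "sup_ge X (ddown_Irr X y) y"
proof -
  have "irreducible_in X (ddown_Irr X y)" and sup: "is_spec_sup X (ddown_Irr X y) y"
    using assms unfolding Irr_continuous_def by auto
  then show "ddown_Irr X y \<in> Irr_plus X"
    unfolding Irr_plus_def by auto
  show "sup_ge X (ddown_Irr X y) y"
    using sup spec_le_refl[OF assms(2)] unfolding sup_ge_def by auto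
qed

lemma Irr_continuous_eventually_above_ddown_imp_Irr_converges:
  assumes "Irr_continuous X" and "y \<in> topspace X"
    and "\<forall>x\<in>ddown_Irr X y. \<exists>k\<in>I. \<forall>i\<in>I. le k i \<longrightarrow> spec_le X x (net i)"
  shows "Irr_converges X I le net y"
  unfolding Irr_converges_def
  using Irr_continuous_ddown_Irr_in_Irr_plus[OF assms(1,2)] assms(3)
  by (intro bexI[of _ "ddown_Irr X y"]) auto

theorem lemma4p3:
  fixes X :: "'a topology" and I :: "'i set" and le :: "'i \<Rightarrow> 'i \<Rightarrow> bool"
    and net :: "'i \<Rightarrow> 'a" and y :: 'a
  assumes "t0_space X" and "Irr_continuous X"
    and "is_preorder_on I le"
    and "net ` I \<subseteq> topspace X"
    and "y \<in> topspace X"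
  shows "Irr_converges X I le net y \<longleftrightarrow>
    (\<forall>x\<in>ddown_Irr X y. \<exists>k\<in>I. \<forall>i\<in>I. le k i \<longrightarrow> spec_le X x (net i))"
proof
  show "Irr_converges X I le net y \<Longrightarrow>
      \<forall>x\<in>ddown_Irr X y. \<exists>k\<in>I. \<forall>i\<in>I. le k i \<longrightarrow> spec_le X x (net i)"
    by (intro ballI Irr_converges_imp_eventually_above_ddown)
  show "\<forall>x\<in>ddown_Irr X y. \<exists>k\<in>I. \<forall>i\<in>I. le k i \<longrightarrow> spec_le X x (net i) \<Longrightarrow>
      Irr_converges X I le net y"
    by (rule Irr_continuous_eventually_above_ddown_imp_Irr_converges[OF assms(2,5)])
qed

end
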